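(* Let $q>1$ and $0<u<1$, and let $x=(u/q,u/q^2,\dots)$, $y=(1,1/q,1/q^2,\dots)$, $t=1/q$. For $N\ge0$ and a partition $\lambda$: $P^N_{x,y,0,t}(\lambda)=0$ if $\lambda$ has more than $N$ parts, and otherwise $$P^N_{x,y,0,t}(\lambda)=\frac{u^{|\lambda|}\,(u/q)_N\,(1/q)_N}{(1/q)_{N-\lambda'_1}}\prod_{i\ge1}\frac{1}{q^{(\lambda'_i)^2}(1/q)_{m_i(\lambda)}}.$$
   Context: $(a)_N=(1-a)(1-a/q)\cdots(1-a/q^{N-1})$, $(a)_0=1$. $\lambda'$ is the conjugate partition ($\lambda'_1$ = number of parts), $m_i(\lambda)$ the number of parts equal to $i$. For a box $s$, $a(s),l(s)$ are arm and leg; $b_\lambda(0,t)=\prod_{s\in\lambda}\frac{1-0^{a(s)}t^{l(s)+1}}{1-0^{a(s)+1}t^{l(s)}}$ ($0^0=1$). $P_\lambda(\cdot;0,t)$ is the Hall–Littlewood polynomial; $\Pi(x,y;0,t)=\prod_{i,j}\frac{1-tx_iy_j}{1-x_iy_j}$. Truncated measure: $P^N_{x,y,0,t}(\lambda)=\frac{P_\lambda(x_1,\dots,x_N,0,\dots;0,t)P_\lambda(y;0,t)b_\lambda(0,t)}{\Pi((x_1,\dots,x_N,0,\dots),y;0,t)}$ for $\lambda$ with at most $N$ parts, $0$ otherwise. *)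

theory Defs
  imports "HOL-Analysis.Analysis" "HOL-Combinatorics.Permutations"
begin

definition is_partition :: "nat list \<Rightarrow> bool" where
  "is_partition lam \<longleftrightarrow> sorted (rev lam) \<and> 0 \<notin> set lam"

(* i-th part, 0-indexed, padded with zeros *)
definition part :: "nat list \<Rightarrow> nat \<Rightarrow> nat" where
  "part lam i = (if i < length lam then lam ! i else 0)"

(* conjugate partition, 1-indexed: conj lam i = \<lambda>'_i = #{parts \<ge> i} *)
definition conj_part :: "nat list \<Rightarrow> nat \<Rightarrow> nat" where
  "conj_part lam i = length (filter (\<lambda>k. i \<le> k) lam)"

definition mult :: "nat list \<Rightarrow> nat \<Rightarrow> nat" where
  "mult lam i = count_list lam i"

definition qpoch :: "real \<Rightarrow> real \<Rightarrow> nat \<Rightarrow> real" where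
  "qpoch q a N = (\<Prod>k<N. 1 - a / q ^ k)"

definition vm :: "real \<Rightarrow> nat \<Rightarrow> real" where
  "vm t m = (\<Prod>j\<in>{1..m}. (1 - t ^ j) / (1 - t))"

(* v_lambda(t) in n variables: m_0 = n - length lam *)
definition vlam :: "nat \<Rightarrow> real \<Rightarrow> nat list \<Rightarrow> real" where
  "vlam n t lam = vm t (n - length lam) * (\<Prod>i\<in>set lam. vm t (mult lam i))"

(* Hall-Littlewood polynomial P_lambda(x_1,...,x_n;0,t) (Macdonald III.(2.2)),
   evaluated at x 0, ..., x (n-1), via the symmetrization formula;
   zero if lam has more than n parts.  (Meaningful at points with distinct
   coordinates, which is all that is used below.) *)
definition HL_P :: "nat \<Rightarrow> real \<Rightarrow> nat list \<Rightarrow> (nat \<Rightarrow> real) \<Rightarrow> real" where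
  "HL_P n t lam x =
     (if length lam > n then 0 else
      (1 / vlam n t lam) *
      (\<Sum>\<sigma>\<in>{\<sigma>. \<sigma> permutes {..<n}}.
         (\<Prod>i<n. x (\<sigma> i) ^ part lam i) *
         (\<Prod>i<n. \<Prod>j\<in>{i<..<n}.
             (x (\<sigma> i) - t * x (\<sigma> j)) / (x (\<sigma> i) - x (\<sigma> j)))))"

definition HL_P_inf :: "real \<Rightarrow> nat list \<Rightarrow> (nat \<Rightarrow> real) \<Rightarrow> real" where
  "HL_P_inf t lam y = lim (\<lambda>n. HL_P n t lam y)"

(* b_lambda(0,t); boxes (i,j) 0-indexed with j < lam_i;
   arm = lam_i - j - 1, leg = lam'_{j+1} - i - 1; 0^0 = 1 *)
definition b_lam :: "real \<Rightarrow> nat list \<Rightarrow> real" where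
  "b_lam t lam =
     (\<Prod>i<length lam. \<Prod>j<lam ! i.
        let a = lam ! i - j - 1; l = conj_part lam (j + 1) - i - 1 in
        (1 - (0::real) ^ a * t ^ (l + 1)) / (1 - (0::real) ^ (a + 1) * t ^ l))"

definition cauchy_Pi :: "real \<Rightarrow> (nat \<Rightarrow> real) \<Rightarrow> (nat \<Rightarrow> real) \<Rightarrow> real" where
  "cauchy_Pi t x y = lim (\<lambda>n. \<Prod>i<n. \<Prod>j<n. (1 - t * x i * y j) / (1 - x i * y j))"

definition trunc_seq :: "nat \<Rightarrow> (nat \<Rightarrow> real) \<Rightarrow> nat \<Rightarrow> real" where
  "trunc_seq N x i = (if i < N then x i else 0)"

(* Truncated measure P^N_{x,y,0,t}(lambda).  P_lambda(x_1,..,x_N,0,...) is the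
   N-variable Hall-Littlewood polynomial (stability). *)
definition HL_measure :: "nat \<Rightarrow> (nat \<Rightarrow> real) \<Rightarrow> (nat \<Rightarrow> real) \<Rightarrow> real \<Rightarrow> nat list \<Rightarrow> real" where
  "HL_measure N x y t lam =
     (if length lam \<le> N then
        HL_P N t lam x * HL_P_inf t lam y * b_lam t lam / cauchy_Pi t (trunc_seq N x) y
      else 0)"

end

theory Submission
  imports Defs
begin

(* At the specialisations of the statement every variable sequence is a geometric progression
   in t = 1/q.  At a geometric progression the symmetrisation defining P_lambda collapses to the
   identity permutation, which gives
     P_lambda(c, c t, ..., c t^(n-1); t) = c^|lambda| t^n(lambda) phi_n(t) / (phi_(n-l)(t) b_lambda(t)),
   and letting n tend to infinity, P_lambda(1, t, t^2, ...; t) = t^n(lambda) / b_lambda(t).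
   The Cauchy product telescopes to 1 / (u/q)_N, and the identity
   sum_i (lambda'_i)^2 = |lambda| + 2 n(lambda) turns the product over i into a power of t. *)

lemma permutes_neq_id_adjacent_inversion:
  assumes \<sigma>: "\<sigma> permutes {..<n}" and "\<sigma> \<noteq> id"
  shows "\<exists>i j. i < j \<and> j < n \<and> \<sigma> i = Suc (\<sigma> j)"
proof (rule ccontr)
  assume no_inversion: "\<not> ?thesis"
  define p where "p = inv \<sigma>"
  have p: "p permutes {..<n}"
    unfolding p_def using \<sigma> by (rule permutes_inv)
  have \<sigma>_p: "\<sigma> (p k) = k" for k
    unfolding p_def using permutes_inverses(1)[OF \<sigma>] by simp
  have "p k < p (Suc k)" if "Suc k < n" for k
  proof (rule ccontr)
    assume "\<not> p k < p (Suc k)"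
    moreover have "p k \<noteq> p (Suc k)" by (metis \<sigma>_p n_not_Suc_n)
    moreover have "p k < n" using permutes_in_image[OF p] that by simp
    ultimately show False using no_inversion \<sigma>_p by (metis linorder_neqE_nat)
  qed
  then have "sorted_wrt (<) (map p [0..<n])"
    by (subst sorted_wrt_iff_nth_Suc_transp) auto
  moreover have "set (map p [0..<n]) = set [0..<n]"
    using permutes_image[OF p] by (simp add: lessThan_atLeast0)
  ultimately have "map p [0..<n] = [0..<n]"
    by (simp add: strict_sorted_equal)
  then have "p k = k" if "k < n" for k
    using nth_map_upt[of k n 0 p] that by simp
  then have "p = id"
    using permutes_not_in[OF p] by (metis eq_id_iff lessThan_iff)
  then show False
    using \<open>\<sigma> \<noteq> id\<close> \<sigma> unfolding p_def by (metis inv_id permutes_inv_inv)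
qed

text \<open>At a geometric progression only the identity survives in the symmetrisation: for any
  other \<sigma> some factor \<open>x (\<sigma> i) - t * x (\<sigma> j)\<close> with \<open>\<sigma> i = Suc (\<sigma> j)\<close> vanishes.\<close>

lemma HL_P_geometric:
  assumes geometric: "\<And>k. x (Suc k) = t * x k" and "length lam \<le> n"
  shows "HL_P n t lam x =
    (\<Prod>i<n. x i ^ part lam i) * (\<Prod>i<n. \<Prod>j\<in>{i<..<n}. (x i - t * x j) / (x i - x j))
      / vlam n t lam"
proof -
  define f where "f \<sigma> = (\<Prod>i<n. x (\<sigma> i) ^ part lam i) *
    (\<Prod>i<n. \<Prod>j\<in>{i<..<n}. (x (\<sigma> i) - t * x (\<sigma> j)) / (x (\<sigma> i) - x (\<sigma> j)))" for \<sigma>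
  have "f \<sigma> = 0" if \<sigma>: "\<sigma> permutes {..<n}" "\<sigma> \<noteq> id" for \<sigma>
  proof -
    obtain i j where "i < j" "j < n" "\<sigma> i = Suc (\<sigma> j)"
      using permutes_neq_id_adjacent_inversion[OF \<sigma>] by blast
    define g where "g i' j' = (x (\<sigma> i') - t * x (\<sigma> j')) / (x (\<sigma> i') - x (\<sigma> j'))" for i' j'
    have "g i j = 0"
      unfolding g_def using geometric \<open>\<sigma> i = Suc (\<sigma> j)\<close> by simp
    then have "\<exists>i'\<in>{..<n}. \<exists>j'\<in>{i'<..<n}. g i' j' = 0"
      using \<open>i < j\<close> \<open>j < n\<close> by (intro bexI[of _ i] bexI[of _ j]) auto
    then have "(\<Prod>i'<n. \<Prod>j'\<in>{i'<..<n}. g i' j') = 0"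
      by simp
    then show ?thesis
      unfolding f_def g_def by simp
  qed
  then have "(\<Sum>\<sigma>\<in>{\<sigma>. \<sigma> permutes {..<n}}. f \<sigma>) = (\<Sum>\<sigma>\<in>{id}. f \<sigma>)"
    by (intro sum.mono_neutral_right) (auto simp: permutes_id finite_permutations)
  then show ?thesis
    using assms(2) unfolding HL_P_def f_def by simp
qed

definition phi :: "real \<Rightarrow> nat \<Rightarrow> real" where
  "phi t m = (\<Prod>j\<in>{1..m}. 1 - t ^ j)"

lemma phi_Suc: "phi t (Suc m) = phi t m * (1 - t ^ Suc m)"
  unfolding phi_def by (simp add: prod.cl_ivl_Suc)

lemma phi_add: "phi t (m + l) = phi t m * (\<Prod>k<l. 1 - t ^ (m + k + 1))"
  by (induction l) (simp_all add: phi_Suc)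

lemma phi_pos: "0 \<le> t \<Longrightarrow> t < 1 \<Longrightarrow> 0 < phi t m"
  unfolding phi_def by (intro prod_pos) (auto simp: power_less_one_iff)

lemma vm_eq_phi: "vm t m = phi t m / (1 - t) ^ m"
  unfolding vm_def phi_def by (simp add: prod_dividef)

lemma vlam_eq_phi:
  assumes "length lam \<le> n"
  shows "vlam n t lam =
    phi t (n - length lam) * (\<Prod>k\<in>set lam. phi t (mult lam k)) / (1 - t) ^ n"
proof -
  have "(\<Prod>k\<in>set lam. (1 - t) ^ mult lam k) = (1 - t) ^ length lam"
    unfolding power_sum[symmetric] mult_def by (simp add: sum_count_set)
  then have "vlam n t lam = phi t (n - length lam) * (\<Prod>k\<in>set lam. phi t (mult lam k))
      / ((1 - t) ^ (n - length lam) * (1 - t) ^ length lam)"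
    unfolding vlam_def vm_eq_phi by (simp add: prod_dividef)
  then show ?thesis
    using assms by (simp flip: power_add)
qed

text \<open>Macdonald's \<open>n(\<lambda>) = \<Sum>\<^sub>i (i - 1) \<lambda>\<^sub>i\<close>, with parts indexed from 0.\<close>

definition n_lam :: "nat list \<Rightarrow> nat" where
  "n_lam lam = (\<Sum>i<length lam. i * lam ! i)"

lemma prod_part_power_principal:
  assumes "length lam \<le> n"
  shows "(\<Prod>i<n. (c * t ^ i) ^ part lam i) = c ^ sum_list lam * t ^ n_lam lam"
proof -
  have "(\<Prod>i<n. (c * t ^ i) ^ part lam i) = (\<Prod>i<length lam. c ^ (lam ! i) * t ^ (i * lam ! i))"
    using assms by (intro prod.mono_neutral_cong_right)
      (auto simp: part_def power_mult_distrib power_mult)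
  then show ?thesis
    by (simp add: prod.distrib power_sum n_lam_def sum_list_sum_nth atLeast0LessThan)
qed

lemma HL_factor_principal:
  fixes t c :: real
  assumes "i < j" and "c \<noteq> 0" and "t \<noteq> 0"
  shows "(c * t ^ i - t * (c * t ^ j)) / (c * t ^ i - c * t ^ j)
    = (1 - t ^ Suc (j - i)) / (1 - t ^ (j - i))"
proof -
  have "t ^ j = t ^ i * t ^ (j - i)"
    using assms(1) by (simp flip: power_add)
  then have "(c * t ^ i - t * (c * t ^ j)) / (c * t ^ i - c * t ^ j)
      = (c * t ^ i * (1 - t ^ Suc (j - i))) / (c * t ^ i * (1 - t ^ (j - i)))"
    by (simp add: algebra_simps)
  then show ?thesis
    using assms by simp
qed

lemma prod_HL_factors_principal:
  fixes t c :: real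
  assumes "0 < t" and "t < 1" and "c \<noteq> 0"
  shows "(\<Prod>i<n. \<Prod>j\<in>{i<..<n}. (c * t ^ i - t * (c * t ^ j)) / (c * t ^ i - c * t ^ j))
    = vm t n"
proof (induction n)
  case 0
  then show ?case by (simp add: vm_def)
next
  case (Suc n)
  define f where "f i j = (c * t ^ i - t * (c * t ^ j)) / (c * t ^ i - c * t ^ j)" for i j
  have "(\<Prod>j\<in>{i<..<Suc n}. f i j) = f i n * (\<Prod>j\<in>{i<..<n}. f i j)" if "i < n" for i
  proof -
    have "{i<..<Suc n} = insert n {i<..<n}" using that by auto
    then show ?thesis by simp
  qed
  moreover have "{n<..<Suc n} = {}" by auto
  ultimately have "(\<Prod>i<Suc n. \<Prod>j\<in>{i<..<Suc n}. f i j) = (\<Prod>i<n. f i n * (\<Prod>j\<in>{i<..<n}. f i j))"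
    unfolding prod.lessThan_Suc by simp
  also have "\<dots> = (\<Prod>i<n. f i n) * vm t n"
    using Suc.IH[folded f_def] by (simp add: prod.distrib)
  also have "(\<Prod>i<n. f i n) = (\<Prod>i<n. (1 - t ^ (Suc n - i)) / (1 - t ^ (Suc n - Suc i)))"
    using assms by (intro prod.cong) (simp_all add: f_def HL_factor_principal Suc_diff_le)
  also have "\<dots> = (1 - t ^ (Suc n - 0)) / (1 - t ^ (Suc n - n))"
  proof (rule prod_lessThan_telescope')
    show "1 - t ^ (Suc n - i) \<noteq> 0" if "i \<le> n" for i
      using assms that power_less_one_iff[of t "Suc n - i"] by auto
  qed
  finally show ?case
    unfolding f_def by (simp add: vm_def prod.cl_ivl_Suc)
qed

lemma HL_P_principal:
  fixes t c :: real
  assumes "0 < t" and "t < 1" and "c \<noteq> 0" and "length lam \<le> n"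
  shows "HL_P n t lam (\<lambda>k. c * t ^ k) = c ^ sum_list lam * t ^ n_lam lam * phi t n
    / (phi t (n - length lam) * (\<Prod>k\<in>set lam. phi t (mult lam k)))"
proof -
  have "HL_P n t lam (\<lambda>k. c * t ^ k) = c ^ sum_list lam * t ^ n_lam lam * vm t n / vlam n t lam"
    using assms by (simp add: HL_P_geometric prod_part_power_principal prod_HL_factors_principal)
  then show ?thesis
    using assms by (simp add: vm_eq_phi vlam_eq_phi)
qed

lemma HL_P_inf_principal:
  fixes t :: real
  assumes "0 < t" and "t < 1"
  shows "HL_P_inf t lam (\<lambda>k. t ^ k) = t ^ n_lam lam / (\<Prod>k\<in>set lam. phi t (mult lam k))"
proof -
  define B where "B = (\<Prod>k\<in>set lam. phi t (mult lam k))"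
  have "HL_P (n + length lam) t lam (\<lambda>k. t ^ k)
      = t ^ n_lam lam * (\<Prod>k<length lam. 1 - t ^ (n + k + 1)) / B" for n
    using HL_P_principal[OF assms one_neq_zero, of lam "n + length lam"] phi_pos[of t n] assms
    by (simp add: B_def phi_add)
  moreover have "(\<lambda>n. t ^ n_lam lam * (\<Prod>k<length lam. 1 - t ^ (n + k + 1)) / B)
      \<longlonglongrightarrow> t ^ n_lam lam * (\<Prod>k<length lam. 1 - 0) / B"
  proof (intro tendsto_intros)
    show "(\<lambda>n. t ^ (n + k + 1)) \<longlonglongrightarrow> 0" for k
      using LIMSEQ_ignore_initial_segment[OF LIMSEQ_power_zero, of t "k + 1"] assms
      by (simp add: add.assoc)
    show "B \<noteq> 0"
      unfolding B_def using assms phi_pos[of t] by (simp add: less_imp_neq[symmetric])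
  qed
  ultimately have "(\<lambda>n. HL_P n t lam (\<lambda>k. t ^ k)) \<longlonglongrightarrow> t ^ n_lam lam / B"
    by (auto intro: LIMSEQ_offset[of _ "length lam"])
  then show ?thesis
    unfolding HL_P_inf_def B_def by (rule limI)
qed

lemma conj_part_nth:
  assumes "sorted (rev lam)" and "i < length lam"
  shows "conj_part lam (lam ! i) = i + count_list (drop i lam) (lam ! i)"
proof -
  have "sorted_wrt (\<ge>) (take i lam @ lam ! i # drop (Suc i) lam)"
    using assms by (simp add: sorted_wrt_rev Cons_nth_drop_Suc)
  then have "\<forall>x\<in>set (take i lam). lam ! i \<le> x" and "\<forall>x\<in>set (drop i lam). x \<le> lam ! i"
    using assms(2) by (auto simp: sorted_wrt_append Cons_nth_drop_Suc[symmetric])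
  then have "filter ((\<le>) (lam ! i)) (take i lam) = take i lam"
    and "filter ((\<le>) (lam ! i)) (drop i lam) = filter ((=) (lam ! i)) (drop i lam)"
    by (auto intro!: filter_cong)
  moreover have "filter P lam = filter P (take i lam) @ filter P (drop i lam)" for P
    by (metis append_take_drop_id filter_append)
  ultimately show ?thesis
    using assms(2) by (simp add: conj_part_def count_list_eq_length_filter)
qed

text \<open>Only the last box of a row has arm 0; every other box contributes the factor 1.\<close>

lemma b_lam_eq_prod_suffix_counts:
  assumes "is_partition lam"
  shows "b_lam t lam = (\<Prod>i<length lam. 1 - t ^ count_list (drop i lam) (lam ! i))"
  unfolding b_lam_def
proof (rule prod.cong[OF refl])
  fix i assume "i \<in> {..<length lam}"
  then have i: "i < length lam" by simp
  obtain m where m: "lam ! i = Suc m"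
    using assms i nth_mem[OF i] by (cases "lam ! i") (auto simp: is_partition_def)
  define c where "c = count_list (drop i lam) (lam ! i)"
  have "conj_part lam (lam ! i) = i + c" and "c \<ge> 1"
    using conj_part_nth[OF _ i] assms i by (simp_all add: c_def is_partition_def Cons_nth_drop_Suc[symmetric])
  then have leg: "conj_part lam (m + 1) - i - 1 + 1 = c"
    using m by simp
  define F where "F j = (let a = lam ! i - j - 1; l = conj_part lam (j + 1) - i - 1 in
      (1 - (0::real) ^ a * t ^ (l + 1)) / (1 - 0 ^ (a + 1) * t ^ l))" for j
  have "F j = 1" if "j < m" for j
    using that m by (simp add: F_def Let_def zero_power)
  then have "(\<Prod>j<lam ! i. F j) = F m"
    unfolding m by simp
  also have "F m = 1 - t ^ c"
    using m leg by (simp add: F_def Let_def del: power_Suc add: power_Suc[symmetric])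
  finally show "(\<Prod>j<lam ! i. F j) = 1 - t ^ count_list (drop i lam) (lam ! i)"
    by (simp add: c_def)
qed

lemma prod_suffix_counts_eq_phi:
  fixes t :: real
  assumes "finite A" and "set xs \<subseteq> A"
  shows "(\<Prod>i<length xs. 1 - t ^ count_list (drop i xs) (xs ! i)) = (\<Prod>k\<in>A. phi t (count_list xs k))"
  using assms(2)
proof (induction xs)
  case Nil
  then show ?case by (simp add: phi_def)
next
  case (Cons x xs)
  then have x: "x \<in> A" and IH: "(\<Prod>i<length xs. 1 - t ^ count_list (drop i xs) (xs ! i))
      = (\<Prod>k\<in>A. phi t (count_list xs k))"
    by simp_all
  have "(\<Prod>k\<in>A - {x}. phi t (count_list (x # xs) k)) = (\<Prod>k\<in>A - {x}. phi t (count_list xs k))"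
    by (rule prod.cong) auto
  then have "(\<Prod>k\<in>A. phi t (count_list (x # xs) k))
      = (1 - t ^ Suc (count_list xs x)) * (\<Prod>k\<in>A. phi t (count_list xs k))"
    by (simp add: prod.remove[OF assms(1) x] phi_Suc)
  then show ?case
    using IH by (simp add: prod.lessThan_Suc_shift del: prod.lessThan_Suc)
qed

lemma b_lam_eq_phi:
  assumes "is_partition lam"
  shows "b_lam t lam = (\<Prod>k\<in>set lam. phi t (mult lam k))"
  unfolding b_lam_eq_prod_suffix_counts[OF assms] mult_def
  by (rule prod_suffix_counts_eq_phi) simp_all

lemma sum_conj_part_squares:
  assumes "sorted (rev lam)" and "\<forall>x\<in>set lam. x \<le> S"
  shows "(\<Sum>i\<in>{1..S}. conj_part lam i ^ 2) = sum_list lam + 2 * n_lam lam"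
  using assms
proof (induction lam rule: rev_induct)
  case Nil
  then show ?case by (simp add: conj_part_def n_lam_def)
next
  case (snoc p xs)
  then have "\<forall>x\<in>set xs. p \<le> x" and "p \<le> S"
    by (simp_all add: sorted_append)
  then have "filter ((\<le>) i) xs = xs" if "i \<le> p" for i
    using that by (auto intro!: filter_True)
  then have conj_snoc: "conj_part (xs @ [p]) i ^ 2
      = conj_part xs i ^ 2 + (if i \<le> p then 2 * length xs + 1 else 0)" for i
    by (auto simp: conj_part_def power2_eq_square)
  then have "(\<Sum>i\<in>{1..S}. conj_part (xs @ [p]) i ^ 2)
      = (\<Sum>i\<in>{1..S}. conj_part xs i ^ 2) + (\<Sum>i\<in>{1..p}. 2 * length xs + 1)"
  proof -
    have "{i \<in> {1..S}. i \<le> p} = {1..p}"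
      using \<open>p \<le> S\<close> by auto
    then show ?thesis
      by (simp add: conj_snoc sum.distrib sum.inter_filter[symmetric])
  qed
  then show ?case
    using snoc by (simp add: sorted_append n_lam_def nth_append algebra_simps)
qed

lemma prod_conj_part_mult_phi:
  assumes "is_partition lam"
  shows "(\<Prod>i\<in>{1..sum_list lam}. t ^ (conj_part lam i ^ 2) / phi t (mult lam i))
    = t ^ (sum_list lam + 2 * n_lam lam) / (\<Prod>k\<in>set lam. phi t (mult lam k))"
proof -
  have parts: "set lam \<subseteq> {1..sum_list lam}"
    using assms by (auto simp: is_partition_def member_le_sum_list Suc_le_eq intro: gr0I)
  have "(\<Prod>i\<in>{1..sum_list lam}. phi t (mult lam i)) = (\<Prod>k\<in>set lam. phi t (mult lam k))"
    using parts by (intro prod.mono_neutral_right) (auto simp: mult_def phi_def)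
  moreover have "(\<Sum>i\<in>{1..sum_list lam}. conj_part lam i ^ 2) = sum_list lam + 2 * n_lam lam"
    using assms by (intro sum_conj_part_squares) (auto simp: is_partition_def member_le_sum_list)
  ultimately show ?thesis
    by (simp add: prod_dividef power_sum[symmetric])
qed

lemma cauchy_Pi_principal:
  fixes t a :: real
  assumes "0 < t" and "t < 1" and "\<bar>a\<bar> < 1"
  shows "cauchy_Pi t (trunc_seq N (\<lambda>i. a * t ^ i)) (\<lambda>j. t ^ j) = 1 / (\<Prod>i<N. 1 - a * t ^ i)"
proof -
  define F where "F i j = (1 - t * trunc_seq N (\<lambda>i. a * t ^ i) i * t ^ j)
      / (1 - trunc_seq N (\<lambda>i. a * t ^ i) i * t ^ j)" for i j
  have nonzero: "1 - a * t ^ k \<noteq> 0" for k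
  proof -
    have "\<bar>a * t ^ k\<bar> \<le> \<bar>a\<bar>"
      using assms by (simp add: abs_mult mult_left_le power_le_one)
    then show ?thesis
      using assms(3) by auto
  qed
  have row: "(\<Prod>j<m. F i j) = (1 - a * t ^ (i + m)) / (1 - a * t ^ i)" if "i < N" for i m
  proof -
    have "(\<Prod>j<m. F i j) = (\<Prod>j<m. (1 - a * t ^ (i + Suc j)) / (1 - a * t ^ (i + j)))"
      using that by (intro prod.cong) (simp_all add: F_def trunc_seq_def power_add mult_ac)
    also have "\<dots> = (1 - a * t ^ (i + m)) / (1 - a * t ^ (i + 0))"
      using nonzero by (intro prod_lessThan_telescope[where f = "\<lambda>j. 1 - a * t ^ (i + j)"])
    finally show ?thesis by simp
  qed
  have "(\<Prod>i<n + N. \<Prod>j<n + N. F i j) = (\<Prod>i<N. (1 - a * t ^ (i + (n + N))) / (1 - a * t ^ i))" for n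
  proof -
    have "(\<Prod>i<n + N. \<Prod>j<n + N. F i j) = (\<Prod>i<N. \<Prod>j<n + N. F i j)"
      by (intro prod.mono_neutral_right) (auto simp: F_def trunc_seq_def)
    then show ?thesis
      by (simp add: row)
  qed
  moreover have "(\<lambda>n. \<Prod>i<N. (1 - a * t ^ (i + (n + N))) / (1 - a * t ^ i))
      \<longlonglongrightarrow> (\<Prod>i<N. (1 - a * 0) / (1 - a * t ^ i))"
  proof (intro tendsto_intros nonzero)
    show "(\<lambda>n. t ^ (i + (n + N))) \<longlonglongrightarrow> 0" for i
      using LIMSEQ_ignore_initial_segment[OF LIMSEQ_power_zero, of t "i + N"] assms
      by (simp add: add_ac)
  qed
  ultimately have "(\<lambda>n. \<Prod>i<n. \<Prod>j<n. F i j) \<longlonglongrightarrow> (\<Prod>i<N. 1 / (1 - a * t ^ i))"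
    by (auto intro: LIMSEQ_offset[of _ N])
  then show ?thesis
    unfolding cauchy_Pi_def F_def by (simp add: limI prod_dividef)
qed

lemma conj_part_1:
  assumes "is_partition lam"
  shows "conj_part lam 1 = length lam"
  using assms unfolding conj_part_def is_partition_def
  by (metis One_nat_def Suc_leI filter_True gr0I)

lemma HL_measure_principal:
  fixes t u :: real
  assumes "0 < t" and "t < 1" and "0 < u" and "u < 1" and "is_partition lam"
  shows "HL_measure N (\<lambda>i. u * t * t ^ i) (\<lambda>j. t ^ j) t lam =
    (if length lam > N then 0 else
       u ^ sum_list lam * (\<Prod>i<N. 1 - u * t * t ^ i) * phi t N / phi t (N - conj_part lam 1)
       * (\<Prod>i\<in>{1..sum_list lam}. t ^ (conj_part lam i ^ 2) / phi t (mult lam i)))"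
proof (cases "length lam > N")
  case True
  then show ?thesis by (simp add: HL_measure_def)
next
  case False
  define B where "B = (\<Prod>k\<in>set lam. phi t (mult lam k))"
  define U where "U = (\<Prod>i<N. 1 - u * t * t ^ i)"
  have "B > 0"
    unfolding B_def using assms by (intro prod_pos) (simp add: phi_pos)
  have "\<bar>u * t\<bar> < 1"
    using mult_strict_mono[of u 1 t 1] assms by simp
  have "HL_measure N (\<lambda>i. u * t * t ^ i) (\<lambda>j. t ^ j) t lam
      = (u * t) ^ sum_list lam * t ^ n_lam lam * phi t N / (phi t (N - length lam) * B)
        * (t ^ n_lam lam / B) * B * U"
    using False assms \<open>\<bar>u * t\<bar> < 1\<close>
    by (simp add: HL_measure_def HL_P_principal HL_P_inf_principal b_lam_eq_phi
        cauchy_Pi_principal B_def U_def)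
  also have "\<dots> = u ^ sum_list lam * U * phi t N / phi t (N - length lam)
      * (t ^ (sum_list lam + 2 * n_lam lam) / B)"
    using \<open>B > 0\<close> by (simp add: field_simps power_add power_mult_distrib mult_2_right)
  finally show ?thesis
    using False
    unfolding conj_part_1[OF assms(5)] prod_conj_part_mult_phi[OF assms(5)] B_def U_def
    by simp
qed

lemma qpoch_inverse_eq_phi: "qpoch q (1 / q) m = phi (1 / q) m"
  unfolding qpoch_def phi_def by (simp add: prod.atLeast1_atMost_eq power_one_over)

theorem lemma4:
  fixes q u :: real and N :: nat and lam :: "nat list"
  assumes "q > 1" and "0 < u" and "u < 1" and "is_partition lam"
  shows "HL_measure N (\<lambda>i. u / q ^ (i + 1)) (\<lambda>j. 1 / q ^ j) (1 / q) lam =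
    (if length lam > N then 0 else
       u ^ sum_list lam * qpoch q (u / q) N * qpoch q (1 / q) N
         / qpoch q (1 / q) (N - conj_part lam 1)
       * (\<Prod>i\<in>{1..sum_list lam}.
            1 / (q ^ (conj_part lam i ^ 2) * qpoch q (1 / q) (mult lam i))))"
proof -
  define t where "t = 1 / q"
  have t: "0 < t" "t < 1"
    using assms(1) by (simp_all add: t_def)
  have "(\<lambda>i. u / q ^ (i + 1)) = (\<lambda>i. u * t * t ^ i)" and "(\<lambda>j. 1 / q ^ j) = (\<lambda>j. t ^ j)"
    and "qpoch q (u / q) N = (\<Prod>i<N. 1 - u * t * t ^ i)"
    and "1 / (q ^ k * phi t m) = t ^ k / phi t m" for k m
    by (simp_all add: t_def qpoch_def power_one_over)
  moreover have "qpoch q (1 / q) m = phi t m" for m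
    by (simp add: t_def qpoch_inverse_eq_phi)
  ultimately show ?thesis
    using HL_measure_principal[OF t assms(2-4), of N] by (simp add: t_def[symmetric])
qed

end
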